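(* In the setting described in the context, if $(x_1,L_1),(x_2,L_2)\in\mathcal E_\varphi$ with $x_1\neq x_2$, then $L_1$ and $L_2$ are transverse.
   Context: $V$ real symplectic of dimension $2n$, $\mathcal L(V)$ its Lagrangian Grassmannian, $\Gamma<\mathrm{PU}(1,1)$ a torsion-free cocompact lattice acting on $\mathbb S^1=\partial\mathcal D_{1,1}$, $\rho:\Gamma\to\mathrm{Sp}(V)$ a homomorphism, and $\varphi:\mathbb S^1\to\mathcal L(V)$ a $\rho$-equivariant measurable map such that (i) $\beta_n(\varphi(x),\varphi(y),\varphi(z))=n\beta_1(x,y,z)$ for Lebesgue-a.e. $(x,y,z)$, and (ii) for every $L\in\mathcal L(V)$ the set of $x$ with $\varphi(x)\cap L\neq0$ has Lebesgue measure zero. Here $\beta_n(L_1,L_2,L_3)$ is the signature of $(x_1,x_2,x_3)\mapsto\langle x_1,x_2\rangle+\langle x_2,x_3\rangle+\langle x_3,x_1\rangle$ on $L_1\oplus L_2\oplus L_3$, and $\beta_1(x,y,z)=\pm1$ for pairwise distinct positively/negatively cyclically ordered triples in $\mathbb S^1$, $0$ otherwise. The essential graph $\mathcal E_\varphi\subset\mathbb S^1\times\mathcal L(V)$ is the support of the pushforward of Lebesgue measure under $x\mapsto(x,\varphi(x))$. *)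

theory Defs
  imports "HOL-Analysis.Analysis"
begin

text \<open>A real symplectic vector space of dimension 2n: the carrier is a Euclidean
  space 'v (the inner product only serves to topologize the Grassmannian) and
  omega is a nondegenerate alternating bilinear form.\<close>

definition symplectic_space :: "('v::euclidean_space \<Rightarrow> 'v \<Rightarrow> real) \<Rightarrow> nat \<Rightarrow> bool" where
  "symplectic_space \<omega> n \<longleftrightarrow>
     bilinear \<omega> \<and> (\<forall>u v. \<omega> u v = - \<omega> v u) \<and>
     (\<forall>u. (\<forall>v. \<omega> u v = 0) \<longrightarrow> u = 0) \<and> DIM('v) = 2 * n"

definition lagrangian :: "('v::euclidean_space \<Rightarrow> 'v \<Rightarrow> real) \<Rightarrow> nat \<Rightarrow> 'v set \<Rightarrow> bool" where
  "lagrangian \<omega> n L \<longleftrightarrow> subspace L \<and> dim L = n \<and> (\<forall>u\<in>L. \<forall>v\<in>L. \<omega> u v = 0)"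

definition symplectic_map :: "('v::euclidean_space \<Rightarrow> 'v \<Rightarrow> real) \<Rightarrow> ('v \<Rightarrow> 'v) \<Rightarrow> bool" where
  "symplectic_map \<omega> g \<longleftrightarrow> linear g \<and> bij g \<and> (\<forall>u v. \<omega> (g u) (g v) = \<omega> u v)"

text \<open>Topology on the Lagrangian Grassmannian: a subspace is identified with
  its orthogonal projection, a bounded linear operator.\<close>
definition oproj :: "'v::euclidean_space set \<Rightarrow> 'v \<Rightarrow> 'v" where
  "oproj L v = (THE w. w \<in> L \<and> (\<forall>u\<in>L. (v - w) \<bullet> u = 0))"

definition lproj :: "'v::euclidean_space set \<Rightarrow> 'v \<Rightarrow>\<^sub>L 'v" where
  "lproj L = Blinfun (oproj L)"

definition pos_index :: "('w::euclidean_space \<Rightarrow> real) \<Rightarrow> 'w set \<Rightarrow> nat" where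
  "pos_index q W = Max {dim U | U. subspace U \<and> U \<subseteq> W \<and> (\<forall>u\<in>U. u \<noteq> 0 \<longrightarrow> q u > 0)}"

definition neg_index :: "('w::euclidean_space \<Rightarrow> real) \<Rightarrow> 'w set \<Rightarrow> nat" where
  "neg_index q W = Max {dim U | U. subspace U \<and> U \<subseteq> W \<and> (\<forall>u\<in>U. u \<noteq> 0 \<longrightarrow> q u < 0)}"

definition signature :: "('w::euclidean_space \<Rightarrow> real) \<Rightarrow> 'w set \<Rightarrow> int" where
  "signature q W = int (pos_index q W) - int (neg_index q W)"

definition maslov :: "('v::euclidean_space \<Rightarrow> 'v \<Rightarrow> real) \<Rightarrow> 'v set \<Rightarrow> 'v set \<Rightarrow> 'v set \<Rightarrow> int" where
  "maslov \<omega> L1 L2 L3 =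
     signature (\<lambda>(x1, x2, x3). \<omega> x1 x2 + \<omega> x2 x3 + \<omega> x3 x1) (L1 \<times> L2 \<times> L3)"

text \<open>Orientation cocycle beta_1 on the unit circle in the complex plane:
  +1 for pairwise distinct counterclockwise (positively) ordered triples,
  -1 for clockwise ordered ones, 0 otherwise.\<close>
definition beta1 :: "complex \<Rightarrow> complex \<Rightarrow> complex \<Rightarrow> int" where
  "beta1 x y z =
     (if x \<noteq> y \<and> y \<noteq> z \<and> x \<noteq> z
      then (if Im (cnj (y - x) * (z - x)) > 0 then 1 else -1) else 0)"

text \<open>SU(1,1) = matrices [[a, b], [cnj b, cnj a]] with |a|^2 - |b|^2 = 1,
  represented by the pair (a,b).  PU(1,1) = SU(1,1)/{+1,-1}; a subgroup of
  PU(1,1) is represented by its (sign-closed) preimage in SU(1,1).\<close>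
definition su11 :: "(complex \<times> complex) set" where
  "su11 = {(a, b). (cmod a)\<^sup>2 - (cmod b)\<^sup>2 = 1}"

definition su11_mult :: "complex \<times> complex \<Rightarrow> complex \<times> complex \<Rightarrow> complex \<times> complex" where
  "su11_mult g h = (case g of (a, b) \<Rightarrow> case h of (c, d) \<Rightarrow>
      (a * c + b * cnj d, a * d + b * cnj c))"

definition su11_inv :: "complex \<times> complex \<Rightarrow> complex \<times> complex" where
  "su11_inv g = (case g of (a, b) \<Rightarrow> (cnj a, - b))"

definition su11_neg :: "complex \<times> complex \<Rightarrow> complex \<times> complex" where
  "su11_neg g = (case g of (a, b) \<Rightarrow> (- a, - b))"

fun su11_pow :: "complex \<times> complex \<Rightarrow> nat \<Rightarrow> complex \<times> complex" where
  "su11_pow g 0 = (1, 0)"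
| "su11_pow g (Suc k) = su11_mult g (su11_pow g k)"

definition pu11_act :: "complex \<times> complex \<Rightarrow> complex \<Rightarrow> complex" where
  "pu11_act g z = (case g of (a, b) \<Rightarrow> (a * z + b) / (cnj b * z + cnj a))"

definition torsion_free_cocompact_lattice :: "(complex \<times> complex) set \<Rightarrow> bool" where
  "torsion_free_cocompact_lattice \<Gamma> \<longleftrightarrow>
     \<Gamma> \<subseteq> su11 \<and> (1, 0) \<in> \<Gamma> \<and>
     (\<forall>g\<in>\<Gamma>. \<forall>h\<in>\<Gamma>. su11_mult g h \<in> \<Gamma>) \<and>
     (\<forall>g\<in>\<Gamma>. su11_inv g \<in> \<Gamma>) \<and>
     (\<forall>g\<in>\<Gamma>. su11_neg g \<in> \<Gamma>) \<and>
     (\<forall>g\<in>\<Gamma>. \<exists>e>0. \<forall>h\<in>\<Gamma>. dist h g < e \<longrightarrow> h = g) \<and>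
     (\<exists>K. compact K \<and> K \<subseteq> su11 \<and> su11 \<subseteq> {su11_mult g k | g k. g \<in> \<Gamma> \<and> k \<in> K}) \<and>
     (\<forall>g\<in>\<Gamma>. \<forall>k\<ge>1. su11_pow g k \<in> {(1, 0), (-1, 0)} \<longrightarrow> g \<in> {(1, 0), (-1, 0)})"

text \<open>Lebesgue measure on the circle is transported from [0, 2 pi) via t \<mapsto> cis t.
  The essential graph is the support of the pushforward of this measure under
  x \<mapsto> (x, phi x) on S^1 \<times> L(V): the points all of whose (basic) neighbourhoods
  have positive measure.\<close>
definition essential_graph ::
  "('v::euclidean_space \<Rightarrow> 'v \<Rightarrow> real) \<Rightarrow> nat \<Rightarrow> (complex \<Rightarrow> 'v set) \<Rightarrow> (complex \<times> 'v set) set" where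
  "essential_graph \<omega> n \<phi> = {(x, L). cmod x = 1 \<and> lagrangian \<omega> n L \<and>
      (\<forall>e>0. emeasure lebesgue
         {t \<in> {0..<2 * pi}. dist (cis t) x < e \<and> norm (lproj (\<phi> (cis t)) - lproj L) < e} > 0)}"

end

(*
  Choose generic angles y < y' on the arc from x1 to x2 and z on the complementary arc, and put
  Y = phi(y), Y' = phi(y'), N = phi(z); almost every choice makes Y, Y', L1 transverse to N and
  every triple below maximal.  For a maximal triple (A, B, N) with B transverse to N, the form
  omega u w is positive whenever u in A, w in B, u - w in N and (u, w) is nonzero: otherwise the
  Maslov form has a nonpositive subspace of dimension n + 1 and a negative one of dimension n
  on A x B x N, forcing signature < n.
  Let P, P' be the projections onto Y, Y' along N.  Values phi(t) with t near x1 form maximal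
  triples with (Y, N), so passing to the limit omega v (P v) >= 0 on L1; similarly
  omega v (P' v) <= 0 on L2.  For v in L1 and L2 these give omega (P v) (P' v) <= 0, while the
  maximal triple (Y, Y', N) forces it to be positive unless v = 0.
*)
theory Submission
  imports Defs
begin

lemma orthogonal_residual_unique:
  fixes L :: "'v::euclidean_space set"
  assumes "subspace L" "w \<in> L" "w' \<in> L"
    and "\<forall>u\<in>L. (v - w) \<bullet> u = 0" "\<forall>u\<in>L. (v - w') \<bullet> u = 0"
  shows "w = w'"
proof -
  have "w - w' \<in> L" using assms(1-3) by (rule subspace_diff)
  then have "((v - w') - (v - w)) \<bullet> (w - w') = 0"
    using assms(4,5) by (simp only: inner_diff_left)
  then show ?thesis by simp
qed

lemma oproj_unique:
  fixes L :: "'v::euclidean_space set"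
  assumes "subspace L" "w \<in> L" "\<forall>u\<in>L. (v - w) \<bullet> u = 0"
  shows "oproj L v = w"
  unfolding oproj_def
  using assms orthogonal_residual_unique[OF assms(1)] by (intro the_equality) blast+

lemma oproj_in_orthogonal:
  fixes L :: "'v::euclidean_space set"
  assumes "subspace L"
  shows "oproj L v \<in> L" and "\<forall>u\<in>L. (v - oproj L v) \<bullet> u = 0"
proof -
  obtain y z where y: "y \<in> span L" and z: "\<And>w. w \<in> span L \<Longrightarrow> orthogonal z w"
    and "v = y + z"
    using orthogonal_subspace_decomp_exists by blast
  have "y \<in> L" using y assms span_eq_iff by blast
  moreover have "\<forall>u\<in>L. (v - y) \<bullet> u = 0"
    using z \<open>v = y + z\<close> by (simp add: orthogonal_def span_base)
  ultimately show "oproj L v \<in> L" "\<forall>u\<in>L. (v - oproj L v) \<bullet> u = 0"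
    using oproj_unique[OF assms] by simp_all
qed

lemma oproj_id:
  fixes L :: "'v::euclidean_space set"
  assumes "subspace L" "v \<in> L"
  shows "oproj L v = v"
  using oproj_unique[OF assms] by simp

lemma linear_oproj:
  fixes L :: "'v::euclidean_space set"
  assumes L: "subspace L"
  shows "linear (oproj L)"
proof (rule linearI)
  note P = oproj_in_orthogonal[OF L]
  fix x y c
  have "(x + y - (oproj L x + oproj L y)) \<bullet> u = (x - oproj L x) \<bullet> u + (y - oproj L y) \<bullet> u" for u
    by (simp add: inner_diff_left inner_add_left)
  then show "oproj L (x + y) = oproj L x + oproj L y"
    using P by (intro oproj_unique[OF L]) (simp_all add: subspace_add[OF L])
  have "(c *\<^sub>R x - c *\<^sub>R oproj L x) \<bullet> u = c * ((x - oproj L x) \<bullet> u)" for u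
    by (simp add: inner_diff_left right_diff_distrib)
  then show "oproj L (c *\<^sub>R x) = c *\<^sub>R oproj L x"
    using P by (intro oproj_unique[OF L]) (simp_all add: subspace_scale[OF L])
qed

lemma blinfun_apply_lproj:
  fixes L :: "'v::euclidean_space set"
  assumes "subspace L"
  shows "blinfun_apply (lproj L) = oproj L"
  unfolding lproj_def
  by (rule bounded_linear_Blinfun_apply) (simp add: linear_oproj[OF assms] flip: linear_conv_bounded_linear)

lemma norm_oproj_diff_le:
  fixes L L' :: "'v::euclidean_space set"
  assumes "subspace L" "subspace L'" "v \<in> L"
  shows "norm (oproj L' v - v) \<le> norm (lproj L' - lproj L) * norm v"
proof -
  have "oproj L' v - v = blinfun_apply (lproj L' - lproj L) v"
    using assms by (simp add: blinfun.diff_left blinfun_apply_lproj oproj_id)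
  then show ?thesis using norm_blinfun by metis
qed

lemma nonneg_of_approximating_subspaces:
  fixes f :: "'v::euclidean_space \<Rightarrow> real"
  assumes f: "isCont f v" and L: "subspace L" "v \<in> L"
    and approx: "\<forall>e>0. \<exists>L'. subspace L' \<and> norm (lproj L' - lproj L) < e \<and> (\<forall>u\<in>L'. f u \<ge> 0)"
  shows "f v \<ge> 0"
proof (rule ccontr)
  assume "\<not> f v \<ge> 0"
  then obtain d where d: "d > 0" "\<forall>u. dist u v < d \<longrightarrow> dist (f u) (f v) < - f v"
    using f unfolding continuous_at_eps_delta by (meson neg_0_less_iff_less not_le)
  define e where "e = d / (norm v + 1)"
  have "e > 0" using d by (simp add: e_def add_nonneg_pos)
  then obtain L' where L': "subspace L'" "norm (lproj L' - lproj L) < e" "\<forall>u\<in>L'. f u \<ge> 0"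
    using approx by blast
  have "norm (oproj L' v - v) \<le> norm (lproj L' - lproj L) * norm v"
    by (rule norm_oproj_diff_le[OF L(1) L'(1) L(2)])
  also have "\<dots> \<le> e * norm v" using L'(2) by (simp add: mult_right_mono)
  also have "\<dots> = d * norm v / (norm v + 1)" by (simp add: e_def)
  also have "\<dots> < d" using d(1) by (simp add: pos_divide_less_eq add_nonneg_pos)
  finally have "dist (f (oproj L' v)) (f v) < - f v" using d(2) by (simp add: dist_norm)
  then have "f (oproj L' v) < 0" by (simp add: dist_real_def)
  moreover have "oproj L' v \<in> L'" using oproj_in_orthogonal[OF L'(1)] by blast
  ultimately show False using L'(3) by force
qed

lemma dim_sums_direct:
  fixes U W :: "'v::euclidean_space set"
  assumes "subspace U" "subspace W" "U \<inter> W = {0}"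
  shows "dim {x + y |x y. x \<in> U \<and> y \<in> W} = dim U + dim W"
  using dim_sums_Int[OF assms(1,2)] assms(3) by simp

lemma dim_add_le_of_Int_eq_0:
  fixes U W S :: "'v::euclidean_space set"
  assumes "subspace U" "subspace W" "subspace S" "U \<subseteq> S" "W \<subseteq> S" "U \<inter> W = {0}"
  shows "dim U + dim W \<le> dim S"
proof -
  have "{x + y |x y. x \<in> U \<and> y \<in> W} \<subseteq> S"
    using assms(3-5) by (auto intro: subspace_add)
  then have "dim {x + y |x y. x \<in> U \<and> y \<in> W} \<le> dim S" by (rule dim_subset)
  then show ?thesis using dim_sums_direct[OF assms(1,2,6)] by simp
qed

lemma dim_sums_span_singleton:
  fixes N :: "'v::euclidean_space set"
  assumes "subspace N" "b \<notin> N"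
  shows "dim {x + y |x y. x \<in> N \<and> y \<in> span {b}} = dim N + 1"
proof -
  have "N \<inter> span {b} = {0}"
  proof safe
    fix x assume "x \<in> N" "x \<in> span {b}"
    then obtain t where "x = t *\<^sub>R b" by (auto simp: span_singleton)
    show "x = 0"
    proof (rule ccontr)
      assume "x \<noteq> 0"
      then have "b = (1 / t) *\<^sub>R x" using \<open>x = t *\<^sub>R b\<close> by auto
      then show False using \<open>x \<in> N\<close> assms by (simp add: subspace_scale)
    qed
  qed (use assms span_zero subspace_0 in auto)
  moreover have "b \<noteq> 0" using assms subspace_0 by blast
  ultimately show ?thesis
    using dim_sums_direct[OF assms(1) subspace_span, of "{b}"]
    by (simp only: dim_span dim_singleton if_False)
qed

lemma complement_projection_exists:
  fixes Y N :: "'v::euclidean_space set"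
  assumes Y: "subspace Y" and N: "subspace N" and YN: "Y \<inter> N = {0}"
    and dims: "dim Y + dim N = DIM('v)"
  obtains P where "linear P" "\<And>x. P x \<in> Y" "\<And>x. x - P x \<in> N"
proof -
  let ?T = "{x + y |x y. x \<in> Y \<and> y \<in> N}"
  have "dim ?T = DIM('v)" using dim_sums_direct[OF Y N YN] dims by simp
  then have "span ?T = UNIV" by (simp add: dim_eq_full)
  moreover have "span ?T = ?T" using subspace_sums[OF Y N] by (rule span_eq_iff[THEN iffD2])
  ultimately have "?T = UNIV" by simp
  then have ex: "\<exists>y. y \<in> Y \<and> x - y \<in> N" for x
  proof -
    obtain a b where "x = a + b" "a \<in> Y" "b \<in> N" using \<open>?T = UNIV\<close> by blast
    then show ?thesis by (intro exI[of _ a]) simp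
  qed
  have uniq: "y1 = y2" if "y1 \<in> Y" "x - y1 \<in> N" "y2 \<in> Y" "x - y2 \<in> N" for x y1 y2
  proof -
    have "(x - y2) - (x - y1) \<in> N" using subspace_diff[OF N that(4,2)] .
    then have "y1 - y2 \<in> Y \<inter> N" using subspace_diff[OF Y that(1,3)] by simp
    then show ?thesis using YN by simp
  qed
  define P where "P x = (SOME y. y \<in> Y \<and> x - y \<in> N)" for x
  have P: "P x \<in> Y" "x - P x \<in> N" for x
    unfolding P_def using someI_ex[OF ex[of x]] by auto
  have "linear P"
  proof (rule linearI)
    fix x y c
    have "(x - P x) + (y - P y) \<in> N" using P subspace_add[OF N] by blast
    then have "(x + y) - (P x + P y) \<in> N" by (simp add: algebra_simps)
    moreover have "P x + P y \<in> Y" using P subspace_add[OF Y] by blast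
    ultimately show "P (x + y) = P x + P y" using P uniq by blast
    have "c *\<^sub>R (x - P x) \<in> N" using P subspace_scale[OF N] by blast
    then have "c *\<^sub>R x - c *\<^sub>R P x \<in> N" by (simp add: scaleR_diff_right)
    moreover have "c *\<^sub>R P x \<in> Y" using P subspace_scale[OF Y] by blast
    ultimately show "P (c *\<^sub>R x) = c *\<^sub>R P x" using P uniq by blast
  qed
  with P show thesis using that by blast
qed

lemma finite_dims:
  "finite {dim U | U :: 'v::euclidean_space set. P U}"
proof (rule finite_subset)
  show "{dim U | U :: 'v set. P U} \<subseteq> {..DIM('v)}" using dim_subset_UNIV by auto
qed simp

lemma pos_index_add_dim_le:
  fixes q :: "'v::euclidean_space \<Rightarrow> real"
  assumes S: "subspace S" and W: "subspace W" "W \<subseteq> S" and nonpos: "\<forall>x\<in>W. q x \<le> 0"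
  shows "pos_index q S + dim W \<le> dim S"
proof -
  let ?D = "{dim U | U. subspace U \<and> U \<subseteq> S \<and> (\<forall>u\<in>U. u \<noteq> 0 \<longrightarrow> q u > 0)}"
  have "dim {0::'v} \<in> ?D" using S by (auto simp: subspace_0)
  then have "pos_index q S \<in> ?D"
    unfolding pos_index_def by (intro Max_in finite_dims) blast
  then obtain U where U: "pos_index q S = dim U" "subspace U" "U \<subseteq> S"
    and pos: "\<forall>u\<in>U. u \<noteq> 0 \<longrightarrow> q u > 0"
    by blast
  have "U \<inter> W = {0}"
  proof safe
    fix x assume "x \<in> U" "x \<in> W"
    show "x = 0"
    proof (rule ccontr)
      assume "x \<noteq> 0"
      then have "q x > 0" using pos \<open>x \<in> U\<close> by blast
      then show False using nonpos \<open>x \<in> W\<close> by fastforce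
    qed
  qed (use U(2) W(1) subspace_0 in auto)
  then show ?thesis using dim_add_le_of_Int_eq_0[OF U(2) W(1) S U(3) W(2)] U(1) by simp
qed

lemma dim_le_neg_index:
  fixes q :: "'v::euclidean_space \<Rightarrow> real"
  assumes "subspace U" "U \<subseteq> W" "\<forall>u\<in>U. u \<noteq> 0 \<longrightarrow> q u < 0"
  shows "dim U \<le> neg_index q W"
  unfolding neg_index_def using assms by (intro Max_ge finite_dims) blast

locale symplectic =
  fixes \<omega> :: "'v::euclidean_space \<Rightarrow> 'v \<Rightarrow> real" and n :: nat
  assumes symplectic_space: "symplectic_space \<omega> n"
begin

lemma bilinear: "bilinear \<omega>"
  and skew: "\<omega> u v = - \<omega> v u"
  and nondegenerate: "(\<And>v. \<omega> u v = 0) \<Longrightarrow> u = 0"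
  and DIM_eq: "DIM('v) = 2 * n"
  using symplectic_space unfolding symplectic_space_def by blast+

lemma omega_simps [simp]:
  "\<omega> (x + y) z = \<omega> x z + \<omega> y z" "\<omega> x (y + z) = \<omega> x y + \<omega> x z"
  "\<omega> (x - y) z = \<omega> x z - \<omega> y z" "\<omega> x (y - z) = \<omega> x y - \<omega> x z"
  "\<omega> (c *\<^sub>R x) y = c * \<omega> x y" "\<omega> x (c *\<^sub>R y) = c * \<omega> x y"
  "\<omega> (- x) y = - \<omega> x y" "\<omega> x (- y) = - \<omega> x y"
  "\<omega> 0 y = 0" "\<omega> x 0 = 0" "\<omega> x x = 0"
  using bilinear_ladd[OF bilinear] bilinear_radd[OF bilinear]
    bilinear_lsub[OF bilinear] bilinear_rsub[OF bilinear]
    bilinear_lmul[OF bilinear, of c x y] bilinear_rmul[OF bilinear, of x c y]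
    bilinear_lneg[OF bilinear] bilinear_rneg[OF bilinear]
    bilinear_lzero[OF bilinear] bilinear_rzero[OF bilinear] skew[of x x]
  by auto

lemma lagrangian_subspace: "lagrangian \<omega> n L \<Longrightarrow> subspace L"
  and lagrangian_dim: "lagrangian \<omega> n L \<Longrightarrow> dim L = n"
  and lagrangian_isotropic: "lagrangian \<omega> n L \<Longrightarrow> u \<in> L \<Longrightarrow> v \<in> L \<Longrightarrow> \<omega> u v = 0"
  by (simp_all add: lagrangian_def)

lemma isCont_omega_linear: "linear P \<Longrightarrow> isCont (\<lambda>u. \<omega> u (P u)) v"
  using bounded_bilinear.isCont[OF bilinear[unfolded bilinear_conv_bounded_bilinear]
      continuous_ident linear_continuous_at[of P]]
  by (simp add: linear_conv_bounded_linear)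

definition J :: "'v \<Rightarrow> 'v" where
  "J y = (\<Sum>b\<in>Basis. \<omega> y b *\<^sub>R b)"

lemma inner_J: "J y \<bullet> c = \<omega> y c"
proof -
  have "\<omega> y c = \<omega> y (\<Sum>b\<in>Basis. (c \<bullet> b) *\<^sub>R b)" by (simp add: euclidean_representation)
  also have "\<dots> = (\<Sum>b\<in>Basis. (c \<bullet> b) * \<omega> y b)"
    using bilinear by (simp add: bilinear_def linear_sum linear_scale)
  also have "\<dots> = J y \<bullet> c"
    unfolding J_def inner_sum_left by (simp add: inner_commute mult.commute)
  finally show ?thesis by simp
qed

lemma linear_J: "linear J"
  unfolding J_def
  by (rule linearI) (simp_all add: scaleR_add_left sum.distrib scaleR_sum_right)

lemma inj_J: "inj J"
proof (rule injI)
  fix x y assume "J x = J y"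
  then have "\<omega> (x - y) c = 0" for c using inner_J by (metis right_minus_eq omega_simps(3))
  then show "x = y" using nondegenerate[of "x - y"] by simp
qed

lemma dim_isotropic_le:
  assumes W: "subspace W" and iso: "\<forall>u\<in>W. \<forall>v\<in>W. \<omega> u v = 0"
  shows "dim W \<le> n"
proof -
  have JW: "subspace (J ` W)" using linear_J W by (rule linear_subspace_image)
  have "dim (J ` W) = dim W"
    using dim_image_eq[OF linear_J inj_on_subset[OF inj_J subset_UNIV]] .
  moreover have "W \<inter> J ` W = {0}"
  proof safe
    fix w assume "J w \<in> W" "w \<in> W"
    then have "J w \<bullet> J w = 0" using iso inner_J by simp
    then show "J w = 0" by simp
  qed (use W JW subspace_0 in auto)
  ultimately show ?thesis
    using dim_add_le_of_Int_eq_0[OF W JW subspace_UNIV] DIM_eq by simp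
qed

lemma mem_lagrangian_if_orthogonal:
  assumes N: "lagrangian \<omega> n N" and b: "\<forall>c\<in>N. \<omega> b c = 0"
  shows "b \<in> N"
proof (rule ccontr)
  assume "b \<notin> N"
  let ?W = "{x + y |x y. x \<in> N \<and> y \<in> span {b}}"
  have W: "subspace ?W" using lagrangian_subspace[OF N] by (simp add: subspace_sums)
  have "\<omega> u v = 0" if uv: "u \<in> ?W" "v \<in> ?W" for u v
  proof -
    obtain x s x' s' where "u = x + s *\<^sub>R b" "x \<in> N" "v = x' + s' *\<^sub>R b" "x' \<in> N"
      using uv by (auto simp: span_singleton)
    moreover have "\<omega> x b = 0" if "x \<in> N" for x using b that skew[of x b] by simp
    ultimately show ?thesis using b lagrangian_isotropic[OF N] by simp
  qed
  then have "dim ?W \<le> n" using dim_isotropic_le[OF W] by blast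
  moreover have "dim ?W = n + 1"
    using dim_sums_span_singleton[OF lagrangian_subspace[OF N] \<open>b \<notin> N\<close>] lagrangian_dim[OF N] by simp
  ultimately show False by simp
qed

lemma lagrangian_projection_exists:
  assumes "lagrangian \<omega> n Y" "lagrangian \<omega> n N" "Y \<inter> N = {0}"
  obtains P where "linear P" "\<And>x. P x \<in> Y" "\<And>x. x - P x \<in> N"
  using complement_projection_exists[of Y N] assms DIM_eq
  by (auto simp: lagrangian_subspace lagrangian_dim)

definition maslov_form :: "'v \<times> 'v \<times> 'v \<Rightarrow> real" where
  "maslov_form = (\<lambda>(x1, x2, x3). \<omega> x1 x2 + \<omega> x2 x3 + \<omega> x3 x1)"

lemma maslov_eq_index_diff:
  "maslov \<omega> A B N =
    int (pos_index maslov_form (A \<times> B \<times> N)) - int (neg_index maslov_form (A \<times> B \<times> N))"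
  unfolding maslov_def signature_def maslov_form_def ..

lemma subspace_dim_lagrangian_Times:
  assumes "lagrangian \<omega> n A" "lagrangian \<omega> n B" "lagrangian \<omega> n N"
  shows "subspace (A \<times> B \<times> N)" "dim (A \<times> B \<times> N) = 3 * n"
  using assms by (simp_all add: lagrangian_subspace lagrangian_dim subspace_Times dim_Times)

lemma pos_index_maslov_form_le:
  assumes A: "lagrangian \<omega> n A" and B: "lagrangian \<omega> n B" and N: "lagrangian \<omega> n N"
    and u: "u \<in> A" and w: "w \<in> B" and uw: "u - w \<in> N" and nz: "u \<noteq> 0 \<or> w \<noteq> 0"
    and nonpos: "\<omega> u w \<le> 0"
  shows "pos_index maslov_form (A \<times> B \<times> N) + (n + 1) \<le> 3 * n"
proof -
  let ?S = "A \<times> B \<times> N" and ?Z = "{0::'v} \<times> {0::'v} \<times> N"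
  let ?W = "{x + y |x y. x \<in> ?Z \<and> y \<in> span {(u, w, 0)}}"
  have sN: "subspace N" using N by (rule lagrangian_subspace)
  have sZ: "subspace ?Z" using sN by (simp add: subspace_Times)
  have "dim ?Z = dim N" using sN by (simp add: dim_Times subspace_Times)
  then have "dim ?Z = n" using lagrangian_dim[OF N] by simp
  moreover have "(u, w, 0) \<notin> ?Z" using nz by auto
  ultimately have dW: "dim ?W = n + 1" using dim_sums_span_singleton[OF sZ] by presburger
  have W: "\<exists>t c. x = (t *\<^sub>R u, t *\<^sub>R w, c) \<and> c \<in> N" if "x \<in> ?W" for x
    using that by (auto simp: span_singleton)
  have sW: "subspace ?W" by (rule subspace_sums[OF sZ subspace_span])
  have WS: "?W \<subseteq> ?S"
  proof
    fix x assume "x \<in> ?W"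
    then obtain t c where "x = (t *\<^sub>R u, t *\<^sub>R w, c)" "c \<in> N" using W by blast
    then show "x \<in> ?S" using u w A B by (simp add: lagrangian_subspace subspace_scale)
  qed
  have "maslov_form x \<le> 0" if "x \<in> ?W" for x
  proof -
    from W[OF that] obtain t c where x: "x = (t *\<^sub>R u, t *\<^sub>R w, c)" and c: "c \<in> N" by blast
    have "\<omega> c (u - w) = 0" using lagrangian_isotropic[OF N c uw] .
    then have "maslov_form x = (t * t) * \<omega> u w"
      unfolding x maslov_form_def using skew[of w c] by (simp add: algebra_simps)
    then show ?thesis using nonpos by (simp add: mult_nonneg_nonpos)
  qed
  then have "pos_index maslov_form ?S + dim ?W \<le> dim ?S"
    using pos_index_add_dim_le[OF subspace_dim_lagrangian_Times(1)[OF A B N] sW WS] by blast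
  then show ?thesis using subspace_dim_lagrangian_Times(2)[OF A B N] dW by simp
qed

lemma n_le_neg_index_maslov_form:
  assumes sA: "subspace A" and B: "lagrangian \<omega> n B" and N: "lagrangian \<omega> n N"
    and BN: "B \<inter> N = {0}"
  shows "n \<le> neg_index maslov_form (A \<times> B \<times> N)"
proof -
  have sB: "subspace B" and sN: "subspace N"
    using B N by (simp_all add: lagrangian_subspace)
  define r where "r b = oproj N (J b)" for b
  have rN: "r b \<in> N" and r_orth: "\<forall>c\<in>N. (J b - r b) \<bullet> c = 0" for b
    unfolding r_def using oproj_in_orthogonal[OF sN] by blast+
  have "linear r" unfolding r_def using linear_compose[OF linear_J linear_oproj[OF sN]] by (simp add: o_def)
  define g where "g b = (0::'v, b, - r b)" for b
  have lg: "linear g" unfolding g_def using \<open>linear r\<close>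
    by (intro linearI) (simp_all add: linear_add linear_scale)
  have "dim (g ` B) = dim B"
    using dim_image_eq[OF lg inj_on_subset[of g UNIV]] by (simp add: g_def inj_def)
  moreover have "g ` B \<subseteq> A \<times> B \<times> N"
    unfolding g_def using sA sN rN by (auto simp: subspace_0 subspace_neg)
  moreover have "maslov_form x < 0" if x: "x \<in> g ` B" "x \<noteq> 0" for x
  proof -
    obtain b where b: "b \<in> B" "x = g b" using x(1) by blast
    have "r b \<noteq> 0"
    proof
      assume "r b = 0"
      then have "\<forall>c\<in>N. \<omega> b c = 0" using r_orth[of b] by (simp add: inner_J)
      then have "b = 0" using mem_lagrangian_if_orthogonal[OF N] BN b(1) by blast
      then show False using b x(2) \<open>linear r\<close> by (simp add: g_def linear_0 zero_prod_def)
    qed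
    have "\<omega> b (r b) = (J b - r b) \<bullet> r b + r b \<bullet> r b" by (simp add: inner_J inner_diff_left)
    also have "\<dots> = r b \<bullet> r b" using r_orth rN by simp
    finally show ?thesis using \<open>r b \<noteq> 0\<close> by (simp add: b(2) g_def maslov_form_def)
  qed
  moreover have "subspace (g ` B)" using lg sB by (rule linear_subspace_image)
  ultimately have "dim B \<le> neg_index maslov_form (A \<times> B \<times> N)"
    using dim_le_neg_index[of "g ` B"] by simp
  then show ?thesis using lagrangian_dim[OF B] by simp
qed

lemma omega_pos_of_maslov_eq_n:
  assumes A: "lagrangian \<omega> n A" and B: "lagrangian \<omega> n B" and N: "lagrangian \<omega> n N"
    and BN: "B \<inter> N = {0}" and maximal: "maslov \<omega> A B N = int n"
    and u: "u \<in> A" and w: "w \<in> B" and uw: "u - w \<in> N" and nz: "u \<noteq> 0 \<or> w \<noteq> 0"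
  shows "\<omega> u w > 0"
proof (rule ccontr)
  assume "\<not> \<omega> u w > 0"
  then have "pos_index maslov_form (A \<times> B \<times> N) + (n + 1) \<le> 3 * n"
    by (intro pos_index_maslov_form_le[OF A B N u w uw nz]) simp
  then show False
    using n_le_neg_index_maslov_form[OF lagrangian_subspace[OF A] B N BN] maximal maslov_eq_index_diff[of A B N] by linarith
qed

lemma omega_projection_nonneg:
  assumes L: "lagrangian \<omega> n L" and Y: "lagrangian \<omega> n Y" and N: "lagrangian \<omega> n N"
    and YN: "Y \<inter> N = {0}" and maximal: "maslov \<omega> L Y N = int n"
    and P: "\<And>x. P x \<in> Y" "\<And>x. x - P x \<in> N" and u: "u \<in> L"
  shows "\<omega> u (P u) \<ge> 0"
proof (cases "u = 0")
  case False
  then show ?thesis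
    using omega_pos_of_maslov_eq_n[OF L Y N YN maximal u P(1) P(2)] by simp
qed simp

lemma omega_projection_nonpos:
  assumes Y: "lagrangian \<omega> n Y" and L: "lagrangian \<omega> n L" and N: "lagrangian \<omega> n N"
    and LN: "L \<inter> N = {0}" and maximal: "maslov \<omega> Y L N = int n"
    and P: "\<And>x. P x \<in> Y" "\<And>x. x - P x \<in> N" and u: "u \<in> L"
  shows "\<omega> u (P u) \<le> 0"
proof (cases "u = 0")
  case False
  have "P u - u \<in> N"
    using subspace_neg[OF lagrangian_subspace[OF N] P(2)[of u]] by simp
  then have "\<omega> (P u) u > 0"
    using omega_pos_of_maslov_eq_n[OF Y L N LN maximal P(1) u] False by simp
  then show ?thesis using skew[of u "P u"] by simp
qed simp

lemma transverse_of_approximations: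
  assumes L1: "lagrangian \<omega> n L1" and L2: "lagrangian \<omega> n L2" and N: "lagrangian \<omega> n N"
    and Y: "lagrangian \<omega> n Y" and Y': "lagrangian \<omega> n Y'"
    and L1N: "L1 \<inter> N = {0}" and YN: "Y \<inter> N = {0}" and Y'N: "Y' \<inter> N = {0}"
    and maximal: "maslov \<omega> Y Y' N = int n"
    and approx1: "\<forall>e>0. \<exists>L. lagrangian \<omega> n L \<and> maslov \<omega> L Y N = int n \<and>
      norm (lproj L - lproj L1) < e"
    and approx2: "\<forall>e>0. \<exists>L. lagrangian \<omega> n L \<and> L \<inter> N = {0} \<and> maslov \<omega> Y' L N = int n \<and>
      norm (lproj L - lproj L2) < e"
  shows "L1 \<inter> L2 = {0}"
proof (rule ccontr)
  assume "L1 \<inter> L2 \<noteq> {0}"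
  moreover have "0 \<in> L1 \<inter> L2" using L1 L2 by (simp add: lagrangian_subspace subspace_0)
  ultimately obtain v where v: "v \<in> L1" "v \<in> L2" "v \<noteq> 0" by blast
  obtain P where P: "linear P" "\<And>x. P x \<in> Y" "\<And>x. x - P x \<in> N"
    by (rule lagrangian_projection_exists[OF Y N YN]) (rule that)
  obtain P' where P': "linear P'" "\<And>x. P' x \<in> Y'" "\<And>x. x - P' x \<in> N"
    by (rule lagrangian_projection_exists[OF Y' N Y'N]) (rule that)
  have "\<omega> v (P v) \<ge> 0"
  proof (rule nonneg_of_approximating_subspaces[OF isCont_omega_linear[OF P(1)]
        lagrangian_subspace[OF L1] v(1)], intro allI impI)
    fix e :: real assume "e > 0"
    then obtain L where L: "lagrangian \<omega> n L" "maslov \<omega> L Y N = int n"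
      "norm (lproj L - lproj L1) < e"
      using approx1 by blast
    have "\<forall>u\<in>L. \<omega> u (P u) \<ge> 0"
      using omega_projection_nonneg[OF L(1) Y N YN L(2) P(2,3)] by blast
    then show "\<exists>L'. subspace L' \<and> norm (lproj L' - lproj L1) < e \<and> (\<forall>u\<in>L'. \<omega> u (P u) \<ge> 0)"
      using L(1,3) lagrangian_subspace by blast
  qed
  moreover have "- \<omega> v (P' v) \<ge> 0"
  proof (rule nonneg_of_approximating_subspaces[OF isCont_minus[OF isCont_omega_linear[OF P'(1)]]
        lagrangian_subspace[OF L2] v(2)], intro allI impI)
    fix e :: real assume "e > 0"
    then obtain L where L: "lagrangian \<omega> n L" "L \<inter> N = {0}" "maslov \<omega> Y' L N = int n"
      "norm (lproj L - lproj L2) < e"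
      using approx2 by blast
    have "\<forall>u\<in>L. - \<omega> u (P' u) \<ge> 0"
      using omega_projection_nonpos[OF Y' L(1) N L(2,3) P'(2,3)] by simp
    then show "\<exists>L'. subspace L' \<and> norm (lproj L' - lproj L2) < e \<and> (\<forall>u\<in>L'. - \<omega> u (P' u) \<ge> 0)"
      using L(1,4) lagrangian_subspace by blast
  qed
  moreover have "\<omega> (P v) (P' v) > 0"
  proof (rule omega_pos_of_maslov_eq_n[OF Y Y' N Y'N maximal P(2) P'(2)])
    have "(v - P' v) - (v - P v) \<in> N"
      using subspace_diff[OF lagrangian_subspace[OF N] P'(3) P(3)] .
    then show "P v - P' v \<in> N" by simp
    have "P v \<noteq> 0"
    proof
      assume "P v = 0"
      then have "v \<in> L1 \<inter> N" using P(3)[of v] v(1) by simp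
      then show False using L1N v(3) by blast
    qed
    then show "P v \<noteq> 0 \<or> P' v \<noteq> 0" ..
  qed
  \<comment> \<open>\<open>P v\<close> and \<open>P' v\<close> differ from \<open>v\<close> by elements of the isotropic \<open>N\<close>\<close>
  moreover have "\<omega> (P v) (P' v) = \<omega> v (P' v) - \<omega> v (P v)"
  proof -
    have "\<omega> (v - P v) (v - P' v) = 0" using lagrangian_isotropic[OF N P(3) P'(3)] .
    then have "\<omega> (P v) (P' v) - \<omega> v (P' v) - \<omega> (P v) v = 0" by simp
    then show ?thesis using skew[of "P v" v] by linarith
  qed
  ultimately show False by linarith
qed

end

lemma AE_imp_ex_in_pos_measure:
  assumes S: "emeasure M S > 0" and P: "AE t in M. P t"
  shows "\<exists>t\<in>S. P t"
proof (rule ccontr)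
  assume "\<not> (\<exists>t\<in>S. P t)"
  from P obtain N where N: "{t \<in> space M. \<not> P t} \<subseteq> N" "emeasure M N = 0" "N \<in> sets M"
    by (rule AE_E)
  have "S \<in> sets M" using S emeasure_notin_sets by force
  then have "S \<subseteq> N" using sets.sets_into_space N(1) \<open>\<not> (\<exists>t\<in>S. P t)\<close> by blast
  then have "emeasure M S \<le> emeasure M N" using N(3) by (rule emeasure_mono)
  then show False using S N(2) by simp
qed

lemma AE_lborel_ex_between:
  fixes a b :: real
  assumes "a < b" "AE t in lborel. P t"
  obtains t where "a < t" "t < b" "P t"
proof -
  have "\<exists>t\<in>{a<..<b}. P t"
    using assms by (intro AE_imp_ex_in_pos_measure[of lborel]) simp_all
  then show thesis using that by auto
qed

lemma AE_lborel_pair_iterated: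
  fixes P :: "'a::euclidean_space \<Rightarrow> 'b::euclidean_space \<Rightarrow> bool"
  assumes "AE p in lborel. P (fst p) (snd p)"
  shows "AE x in lborel. AE y in lborel. P x y" and "AE y in lborel. AE x in lborel. P x y"
proof -
  have "(lborel :: ('a \<times> 'b) measure) = lborel \<Otimes>\<^sub>M lborel" by (rule lborel_prod[symmetric])
  then have P: "AE p in (lborel :: 'a measure) \<Otimes>\<^sub>M (lborel :: 'b measure). P (fst p) (snd p)"
    using assms by (simp only:)
  then show "AE x in lborel. AE y in lborel. P x y" using lborel_pair.AE_pair by fastforce
  have "(lborel :: 'a measure) \<Otimes>\<^sub>M (lborel :: 'b measure) =
      distr ((lborel :: 'b measure) \<Otimes>\<^sub>M (lborel :: 'a measure))
        ((lborel :: 'a measure) \<Otimes>\<^sub>M (lborel :: 'b measure)) (\<lambda>(y, x). (x, y))"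
    by (rule lborel_pair.distr_pair_swap)
  then have "AE p in distr ((lborel :: 'b measure) \<Otimes>\<^sub>M (lborel :: 'a measure))
      ((lborel :: 'a measure) \<Otimes>\<^sub>M (lborel :: 'b measure)) (\<lambda>(y, x). (x, y)). P (fst p) (snd p)"
    using P by (simp only:)
  then have "AE q in (lborel :: 'b measure) \<Otimes>\<^sub>M (lborel :: 'a measure). P (snd q) (fst q)"
    by (auto dest: AE_distrD[OF measurable_pair_swap'] simp: case_prod_beta)
  then show "AE y in lborel. AE x in lborel. P x y" using lborel_pair.AE_pair by fastforce
qed

lemma AE_lborel3_iterated:
  fixes M :: "real \<Rightarrow> real \<Rightarrow> real \<Rightarrow> bool"
  assumes "AE p in lborel. M (fst p) (fst (snd p)) (snd (snd p))"
  shows "AE x in lborel. AE y in lborel. AE z in lborel. M x y z"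
    and "AE x in lborel. AE z in lborel. AE y in lborel. M x y z"
    and "AE y in lborel. AE z in lborel. AE x in lborel. M x y z"
proof -
  note split = AE_lborel_pair_iterated[of "\<lambda>x q. M x (fst q) (snd q)", simplified]
  have inner: "AE x in lborel. AE q in lborel. M x (fst q) (snd q)"
    and outer: "AE q in lborel. AE x in lborel. M x (fst q) (snd q)"
    using split assms by blast+
  show "AE x in lborel. AE y in lborel. AE z in lborel. M x y z"
    using inner by eventually_elim (rule AE_lborel_pair_iterated(1))
  show "AE x in lborel. AE z in lborel. AE y in lborel. M x y z"
    using inner by eventually_elim (rule AE_lborel_pair_iterated(2))
  show "AE y in lborel. AE z in lborel. AE x in lborel. M x y z"
    using outer by (rule AE_lborel_pair_iterated(1))
qed

lemma AE_lborel3_generic_triple: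
  fixes M :: "real \<Rightarrow> real \<Rightarrow> real \<Rightarrow> bool" and T :: "real \<Rightarrow> real \<Rightarrow> bool"
  assumes M: "AE p in lborel. M (fst p) (fst (snd p)) (snd (snd p))"
    and T: "\<And>s. AE t in lborel. T s t"
    and abc: "a < b" "b < c"
  obtains x y z where "a < x" "x < y" "y < b" "b < z" "z < c" "M x y z"
    "AE s in lborel. M s x z" "AE s in lborel. M y s z" "T x z" "T y z"
proof -
  note M3 = AE_lborel3_iterated[OF M]
  have "a < (a + b) / 2" "(a + b) / 2 < b" using abc(1) by simp_all
  obtain x where x: "a < x" "x < (a + b) / 2" "AE y in lborel. AE z in lborel. M x y z"
    "AE z in lborel. AE s in lborel. M s x z"
    using AE_lborel_ex_between[OF \<open>a < (a + b) / 2\<close> eventually_conj[OF M3(1) M3(3)]] by blast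
  obtain y where y: "(a + b) / 2 < y" "y < b" "AE z in lborel. M x y z"
    "AE z in lborel. AE s in lborel. M y s z"
    using AE_lborel_ex_between[OF \<open>(a + b) / 2 < b\<close> eventually_conj[OF x(3) M3(2)]] by blast
  have "AE z in lborel. M x y z \<and> (AE s in lborel. M s x z) \<and> (AE s in lborel. M y s z) \<and>
      T x z \<and> T y z"
    using y(3) x(4) y(4) T[of x] T[of y] by eventually_elim blast
  then obtain z where "b < z" "z < c" "M x y z" "AE s in lborel. M s x z"
    "AE s in lborel. M y s z" "T x z" "T y z"
    using AE_lborel_ex_between[OF abc(2)] by blast
  moreover have "x < y" using x(2) y(1) by simp
  ultimately show thesis using that x(1) y(2) by blast
qed

lemma essential_graph_approx:
  assumes "(x, L) \<in> essential_graph \<omega> n \<phi>" and U: "open U" "x \<in> U"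
    and P: "AE t in lborel. P t" and Q: "\<And>t. cis t \<in> U \<Longrightarrow> P t \<Longrightarrow> Q (\<phi> (cis t))"
  shows "\<forall>e>0. \<exists>L'. Q L' \<and> norm (lproj L' - lproj L) < e"
proof (intro allI impI)
  fix e :: real assume "e > 0"
  obtain r where r: "r > 0" "ball x r \<subseteq> U" using U by (rule openE)
  have pos: "\<forall>e>0. emeasure lebesgue {t \<in> {0..<2 * pi}. dist (cis t) x < e \<and>
      norm (lproj (\<phi> (cis t)) - lproj L) < e} > 0"
    using assms(1) unfolding essential_graph_def by blast
  have "emeasure lebesgue {t \<in> {0..<2 * pi}. dist (cis t) x < min e r \<and>
      norm (lproj (\<phi> (cis t)) - lproj L) < min e r} > 0"
    using pos[rule_format, of "min e r"] \<open>e > 0\<close> r(1) by simp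
  moreover have "AE t in lebesgue. P t" using P by (rule AE_completion)
  ultimately obtain t where "dist (cis t) x < r" "norm (lproj (\<phi> (cis t)) - lproj L) < e" "P t"
    by (auto dest: AE_imp_ex_in_pos_measure)
  moreover have "cis t \<in> U" using r(2) \<open>dist (cis t) x < r\<close> by (auto simp: dist_commute)
  ultimately show "\<exists>L'. Q L' \<and> norm (lproj L' - lproj L) < e" using Q by blast
qed

text \<open>Twice the signed area of the triangle \<open>x y z\<close>.\<close>
definition ccw :: "complex \<Rightarrow> complex \<Rightarrow> complex \<Rightarrow> real" where
  "ccw x y z = Im (cnj (y - x) * (z - x))"

lemma beta1_eq_1_if_ccw_pos:
  assumes "ccw x y z > 0"
  shows "beta1 x y z = 1"
proof -
  have "y \<noteq> z"
  proof
    assume "y = z"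
    then have "ccw x y z = 0" by (simp add: ccw_def algebra_simps)
    then show False using assms by simp
  qed
  moreover have "x \<noteq> y" "x \<noteq> z" using assms by (auto simp: ccw_def)
  ultimately show ?thesis using assms unfolding beta1_def ccw_def by simp
qed

lemma open_ccw_pos:
  shows "open {x. ccw x y z > 0}" and "open {y. ccw x y z > 0}"
  unfolding ccw_def by (auto intro!: open_Collect_less continuous_intros)

lemma sin_double_add_sin_double_diff:
  fixes a b :: real
  shows "sin (2 * a) + sin (2 * b) - sin (2 * a + 2 * b) = 4 * sin a * sin b * sin (a + b)"
proof -
  have "sin (2 * a) + sin (2 * b) - sin (2 * a + 2 * b)
      = sin (2 * a) * (1 - cos (2 * b)) + sin (2 * b) * (1 - cos (2 * a))"
    by (simp add: sin_add algebra_simps)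
  also have "\<dots> = (2 * sin a * cos a) * (2 * sin b ^ 2) + (2 * sin b * cos b) * (2 * sin a ^ 2)"
    by (simp add: sin_double cos_double_sin)
  also have "\<dots> = 4 * sin a * sin b * (sin a * cos b + cos a * sin b)"
    by (simp add: power2_eq_square algebra_simps)
  finally show ?thesis by (simp add: sin_add)
qed

lemma ccw_cis_pos:
  fixes \<alpha> \<beta> \<gamma> :: real
  assumes "\<alpha> < \<beta>" "\<beta> < \<gamma>" "\<gamma> < \<alpha> + 2 * pi"
  shows "ccw (cis \<alpha>) (cis \<beta>) (cis \<gamma>) > 0"
proof -
  define a b where "a = (\<beta> - \<alpha>) / 2" and "b = (\<gamma> - \<beta>) / 2"
  have "ccw (cis \<alpha>) (cis \<beta>) (cis \<gamma>) = sin (\<beta> - \<alpha>) + sin (\<gamma> - \<beta>) - sin (\<gamma> - \<alpha>)"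
    by (simp add: ccw_def sin_diff algebra_simps)
  also have "\<dots> = sin (2 * a) + sin (2 * b) - sin (2 * a + 2 * b)"
  proof -
    have "2 * a = \<beta> - \<alpha>" "2 * b = \<gamma> - \<beta>" "2 * a + 2 * b = \<gamma> - \<alpha>"
      by (simp_all add: a_def b_def field_simps)
    then show ?thesis by (simp only:)
  qed
  also have "\<dots> = 4 * sin a * sin b * sin (a + b)"
    by (rule sin_double_add_sin_double_diff)
  also have "\<dots> > 0"
    using assms by (simp add: a_def b_def sin_gt_zero field_simps)
  finally show ?thesis .
qed

lemma unit_circle_ordered_angles:
  assumes "cmod x1 = 1" "cmod x2 = 1" "x1 \<noteq> x2"
  obtains t1 t2 where "x1 = cis t1" "x2 = cis t2" "t1 < t2" "t2 < t1 + 2 * pi"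
proof -
  have "cis (Arg x) = x" if "cmod x = 1" for x
  proof -
    have "x \<noteq> 0" using that by auto
    then show ?thesis using that by (simp add: cis_Arg sgn_eq)
  qed
  then have x: "x1 = cis (Arg x1)" "x2 = cis (Arg x2)" using assms(1,2) by auto
  then have "Arg x1 \<noteq> Arg x2" using assms(3) by metis
  moreover have "cis (Arg x2 + 2 * pi) = cis (Arg x2)" by (simp add: cis_mult[symmetric])
  ultimately show thesis
    using that x Arg_bounded[of x1] Arg_bounded[of x2]
    by (cases "Arg x1 < Arg x2") (auto intro: that[of "Arg x1" "Arg x2 + 2 * pi"])
qed

locale maximal_boundary_map = symplectic +
  fixes \<phi> :: "complex \<Rightarrow> 'a set"
  assumes lagrangian_phi: "lagrangian \<omega> n (\<phi> (cis t))"
    and transverse_phi: "lagrangian \<omega> n L \<Longrightarrow> AE t in lborel. \<phi> (cis t) \<inter> L = {0}"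
begin

definition maximal_triple :: "real \<Rightarrow> real \<Rightarrow> real \<Rightarrow> bool" where
  "maximal_triple a b c \<longleftrightarrow>
     maslov \<omega> (\<phi> (cis a)) (\<phi> (cis b)) (\<phi> (cis c)) = int n * beta1 (cis a) (cis b) (cis c)"

lemma maslov_eq_n_if_ccw_pos:
  "maximal_triple a b c \<Longrightarrow> ccw (cis a) (cis b) (cis c) > 0 \<Longrightarrow>
    maslov \<omega> (\<phi> (cis a)) (\<phi> (cis b)) (\<phi> (cis c)) = int n"
  by (simp add: maximal_triple_def beta1_eq_1_if_ccw_pos)

lemma essential_graph_approx_left:
  assumes "(cis t1, L1) \<in> essential_graph \<omega> n \<phi>" "t1 < y" "y < z" "z < t1 + 2 * pi"
    and "AE s in lborel. maximal_triple s y z"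
  shows "\<forall>e>0. \<exists>L. lagrangian \<omega> n L \<and> maslov \<omega> L (\<phi> (cis y)) (\<phi> (cis z)) = int n \<and>
    norm (lproj L - lproj L1) < e"
proof -
  have "cis t1 \<in> {x. ccw x (cis y) (cis z) > 0}" using ccw_cis_pos assms(2-4) by simp
  then have "\<forall>e>0. \<exists>L. (lagrangian \<omega> n L \<and> maslov \<omega> L (\<phi> (cis y)) (\<phi> (cis z)) = int n) \<and>
      norm (lproj L - lproj L1) < e"
    by (rule essential_graph_approx[OF assms(1) open_ccw_pos(1) _ assms(5)])
      (simp add: lagrangian_phi maslov_eq_n_if_ccw_pos)
  then show ?thesis unfolding conj_assoc .
qed

lemma essential_graph_approx_right:
  assumes "(cis t2, L2) \<in> essential_graph \<omega> n \<phi>" "y' < t2" "t2 < z" "z < y' + 2 * pi"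
    and "AE s in lborel. maximal_triple y' s z"
  shows "\<forall>e>0. \<exists>L. lagrangian \<omega> n L \<and> L \<inter> \<phi> (cis z) = {0} \<and>
    maslov \<omega> (\<phi> (cis y')) L (\<phi> (cis z)) = int n \<and> norm (lproj L - lproj L2) < e"
proof -
  have "cis t2 \<in> {x. ccw (cis y') x (cis z) > 0}" using ccw_cis_pos assms(2-4) by simp
  moreover have "AE s in lborel. maximal_triple y' s z \<and> \<phi> (cis s) \<inter> \<phi> (cis z) = {0}"
    using assms(5) transverse_phi[OF lagrangian_phi] by (rule eventually_conj)
  ultimately have "\<forall>e>0. \<exists>L. (lagrangian \<omega> n L \<and> L \<inter> \<phi> (cis z) = {0} \<and>
      maslov \<omega> (\<phi> (cis y')) L (\<phi> (cis z)) = int n) \<and> norm (lproj L - lproj L2) < e"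
    by (rule essential_graph_approx[OF assms(1) open_ccw_pos(2)])
      (simp add: lagrangian_phi maslov_eq_n_if_ccw_pos)
  then show ?thesis unfolding conj_assoc .
qed

end

theorem lemma8p4:
  fixes \<omega> :: "'v::euclidean_space \<Rightarrow> 'v \<Rightarrow> real" and n :: nat
    and \<Gamma> :: "(complex \<times> complex) set"
    and \<rho> :: "complex \<times> complex \<Rightarrow> 'v \<Rightarrow> 'v"
    and \<phi> :: "complex \<Rightarrow> 'v set"
    and x1 x2 :: complex and L1 L2 :: "'v set"
  assumes symp: "symplectic_space \<omega> n"
    and lattice: "torsion_free_cocompact_lattice \<Gamma>"
    and rho_sp: "\<forall>g\<in>\<Gamma>. symplectic_map \<omega> (\<rho> g)"
    and rho_hom: "\<forall>g\<in>\<Gamma>. \<forall>h\<in>\<Gamma>. \<rho> (su11_mult g h) = \<rho> g \<circ> \<rho> h"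
    and rho_proj: "\<forall>g\<in>\<Gamma>. \<rho> (su11_neg g) = \<rho> g"
    and phi_lag: "\<forall>z\<in>sphere 0 1. lagrangian \<omega> n (\<phi> z)"
    and phi_meas: "(\<lambda>t. lproj (\<phi> (cis t))) \<in> borel_measurable lebesgue"
    and phi_equiv: "\<forall>g\<in>\<Gamma>. AE t in lebesgue. \<phi> (pu11_act g (cis t)) = \<rho> g ` \<phi> (cis t)"
    and maximal: "AE p in (lborel :: (real \<times> real \<times> real) measure).
        maslov \<omega> (\<phi> (cis (fst p))) (\<phi> (cis (fst (snd p)))) (\<phi> (cis (snd (snd p))))
          = int n * beta1 (cis (fst p)) (cis (fst (snd p))) (cis (snd (snd p)))"
    and transv: "\<forall>L. lagrangian \<omega> n L \<longrightarrow> (AE t in lebesgue. \<phi> (cis t) \<inter> L = {0})"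
    and in1: "(x1, L1) \<in> essential_graph \<omega> n \<phi>"
    and in2: "(x2, L2) \<in> essential_graph \<omega> n \<phi>"
    and neq: "x1 \<noteq> x2"
  shows "L1 \<inter> L2 = {0}"
proof -
  interpret maximal_boundary_map \<omega> n \<phi>
  proof unfold_locales
    show "symplectic_space \<omega> n" by (rule symp)
    show "lagrangian \<omega> n (\<phi> (cis t))" for t using phi_lag by simp
    show "AE t in lborel. \<phi> (cis t) \<inter> L = {0}" if "lagrangian \<omega> n L" for L
      using transv that by (simp add: AE_completion_iff)
  qed
  have "cmod x1 = 1" "cmod x2 = 1" and L12: "lagrangian \<omega> n L1" "lagrangian \<omega> n L2"
    using in1 in2 unfolding essential_graph_def by auto
  then obtain t1 t2 where t: "x1 = cis t1" "x2 = cis t2" "t1 < t2" "t2 < t1 + 2 * pi"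
    using unit_circle_ordered_angles neq by metis
  have "AE t in lborel. \<phi> (cis t) \<inter> \<phi> (cis s) = {0} \<and> \<phi> (cis t) \<inter> L1 = {0}" for s
    using transverse_phi[OF lagrangian_phi] transverse_phi[OF L12(1)] by (rule eventually_conj)
  then obtain y y' z where angles: "t1 < y" "y < y'" "y' < t2" "t2 < z" "z < t1 + 2 * pi"
    and maximal_yy'z: "maximal_triple y y' z" "AE s in lborel. maximal_triple s y z"
      "AE s in lborel. maximal_triple y' s z"
    and transverse: "\<phi> (cis z) \<inter> \<phi> (cis y) = {0} \<and> \<phi> (cis z) \<inter> L1 = {0}"
      "\<phi> (cis z) \<inter> \<phi> (cis y') = {0} \<and> \<phi> (cis z) \<inter> L1 = {0}"
    by (rule AE_lborel3_generic_triple[OF maximal[folded maximal_triple_def] _ t(3,4)])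
  show ?thesis
  proof (rule transverse_of_approximations[where N = "\<phi> (cis z)" and Y = "\<phi> (cis y)"
        and Y' = "\<phi> (cis y')", OF L12 lagrangian_phi lagrangian_phi lagrangian_phi])
    show "maslov \<omega> (\<phi> (cis y)) (\<phi> (cis y')) (\<phi> (cis z)) = int n"
      using angles by (intro maslov_eq_n_if_ccw_pos[OF maximal_yy'z(1)] ccw_cis_pos) simp_all
    show "\<forall>e>0. \<exists>L. lagrangian \<omega> n L \<and> maslov \<omega> L (\<phi> (cis y)) (\<phi> (cis z)) = int n \<and>
        norm (lproj L - lproj L1) < e"
      using angles by (intro essential_graph_approx_left[OF in1[unfolded t(1)] _ _ _ maximal_yy'z(2)])
        simp_all
    show "\<forall>e>0. \<exists>L. lagrangian \<omega> n L \<and> L \<inter> \<phi> (cis z) = {0} \<and>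
        maslov \<omega> (\<phi> (cis y')) L (\<phi> (cis z)) = int n \<and> norm (lproj L - lproj L2) < e"
      using angles by (intro essential_graph_approx_right[OF in2[unfolded t(2)] _ _ _ maximal_yy'z(3)])
        simp_all
  qed (use transverse in auto)
qed

end
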